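(* Let $k\in\omega\setminus\{0,1\}$ and let $\varphi:\omega\to\omega$ be a nondecreasing function with $\varphi(n)\ge n$ for all $n\in\omega$ and $\varphi(0)=0$. Then there exist a closed class $A$ of decision tables from $\mathcal M_k^\infty$ and a bounded complexity measure $\psi$ such that $\mathcal H^\infty_{\psi,A}$ is everywhere defined and $\varphi(n)\le\mathcal H^\infty_{\psi,A}(n)\le\varphi(n)+n$ for all $n\in\omega$.
   Context: Notation: $\omega=\{0,1,2,\dots\}$; $\mathcal P(\omega)$ is the set of nonempty finite subsets of $\omega$; for $k\in\omega\setminus\{0,1\}$, $E_k=\{0,1,\dots,k-1\}$. $P=\{f_i:i\in\omega\}$ is a set of attributes, $f_i\neq f_j$ for $i\ne j$. Decision tables: $\mathcal M_k^\infty$ is the set of rectangular tables filled with numbers from $E_k$, whose columns are labeled with pairwise different attributes from $P$, whose rows are pairwise different, and each row of which is labeled with a set from $\mathcal P(\omega)$ (its set of decisions). The empty table (no rows) is denoted $\Lambda$ and belongs to $\mathcal M_k^\infty$. For $T\in\mathcal M_k^\infty$: $\Delta(T)$ is the set of rows; $\Pi(T)$ is the intersection of the decision sets of all rows (common decisions); $\mathrm{At}(T)$ is the set of attributes labeling columns. For nonempty $T$ and a word $\alpha=(f_{i_1},\delta_1)\cdots(f_{i_m},\delta_m)$ with $f_{i_j}\in\mathrm{At}(T)$, $\delta_j\in E_k$, $T\alpha$ is the subtable of $T$ consisting of the rows having value $\delta_j$ in the column $f_{i_j}$ for all $j$; for the empty word $\lambda$, $T\lambda=T$. Operations: for $D\subseteq\mathrm{At}(T)$,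 $I(D,T)$ is obtained from $T$ by deleting the columns labeled with attributes from $D$ and, in each group of rows coinciding on the remaining columns, keeping only the first row; $I(\mathrm{At}(T),T)=\Lambda$. For $\nu:E_k^{|\mathrm{At}(T)|}\to\mathcal P(\omega)$, $J(\nu,T)$ is obtained by replacing the decision set of each row $\bar\delta$ by $\nu(\bar\delta)$. $[T]=\{J(\nu,I(D,T)):D\subseteq\mathrm{At}(T),\ \nu:E_k^{|\mathrm{At}(T)\setminus D|}\to\mathcal P(\omega)\}$; for nonempty $A\subseteq\mathcal M_k^\infty$, $[A]=\bigcup_{T\in A}[T]$. $A$ is a closed class if $[A]=A$. Decision trees: a $k$-decision tree is a finite directed rooted tree with at least two nodes in which the root and the edges leaving the root are unlabeled, each terminal node is labeled with a decision from $\omega$, and each other node is labeled with an attribute from $P$, each edge leaving such a node being labeled with a number from $E_k$. $\mathrm{At}(\Gamma)$ is the set of attributes labeling nodes of $\Gamma$. For a complete path $\tau=v_1,d_1,\dots,v_m,d_m,v_{m+1}$ (from the root to a terminal node), $\pi(\tau)=\lambda$ if $m=1$, and otherwise $\pi(\tau)=(f_{i_2},\delta_2)\cdots(f_{i_m},\delta_m)$ where $v_j$ is labeled $f_{i_j}$ and $d_j$ is labeled $\delta_j$; $T(\tau)=T\pi(\tau)$. For $T\ne\Lambda$, a nondeterministic decision tree for $T$ is a $k$-decision tree $\Gamma$ with $\mathrm{At}(\Gamma)\subseteq\mathrm{At}(T)$ such that every row of $T$ belongs to $T(\tau)$ for some complete path $\tau$, and for every complete path $\tau$ either $T(\tau)=\Lambda$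 or the decision at the terminal node of $\tau$ belongs to $\Pi(T(\tau))$. A deterministic decision tree for $T$ is a nondeterministic decision tree for $T$ in which, additionally, exactly one edge leaves the root and the edges leaving any node that is neither the root nor terminal are labeled with pairwise different numbers. Complexity measures: a partially bounded complexity measure is a function $\psi:P^*\to\omega$ on finite words over $P$ such that for all words $\alpha_1,\alpha_2$: $\psi(\alpha_1)=0$ iff $\alpha_1=\lambda$; $\psi(\alpha_1)$ is invariant under permutation of letters; $\psi(\alpha_1)\le\psi(\alpha_1\alpha_2)$; $\psi(\alpha_1\alpha_2)\le\psi(\alpha_1)+\psi(\alpha_2)$. It is bounded if in addition $\psi(\alpha)\ge|\alpha|$ for all $\alpha$. $\psi$ is extended to words $(f_{i_1},\delta_1)\cdots(f_{i_m},\delta_m)$ by $\psi(f_{i_1}\cdots f_{i_m})$. For a $k$-decision tree $\Gamma$, $\psi(\Gamma)=\max_\tau\psi(\pi(\tau))$ over complete paths. For $T\ne\Lambda$, $\psi^d(T)$ (resp. $\psi^a(T)$) is the minimum of $\psi(\Gamma)$ over deterministic (resp. nondeterministic) decision trees $\Gamma$ for $T$; $\psi^d(\Lambda)=\psi^a(\Lambda)=0$. $\mathcal H^\infty_{\psi,A}(n)$ is undefined if the set $\{\psi^d(T):T\in A,\ \psi^a(T)\le n\}$ is infinite, and otherwise equals its maximum; it is everywhere defined if defined for all $n\in\omega$. *)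

theory Defs
  imports "HOL-Library.Multiset"
begin

text \<open>Attributes f_i are represented by their indices i :: nat; decisions are nats;
  values are nats (in E_k = {0..<k}).  A table is a pair (column labels, rows), where
  each row is a pair (tuple of values, set of decisions).  The order of rows matters
  (operation I keeps the first row of each group).\<close>

type_synonym table = "nat list \<times> (nat list \<times> nat set) list"

definition cols :: "table \<Rightarrow> nat list" where "cols T = fst T"
definition rows :: "table \<Rightarrow> (nat list \<times> nat set) list" where "rows T = snd T"

definition Lam :: table where "Lam = ([], [])"

definition At :: "table \<Rightarrow> nat set" where "At T = set (cols T)"

definition Pi_tab :: "table \<Rightarrow> nat set" where
  "Pi_tab T = \<Inter> (snd ` set (rows T))"

definition M_k :: "nat \<Rightarrow> table set" where
  "M_k k = {T. distinct (cols T) \<and> distinct (map fst (rows T))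
     \<and> (\<forall>r\<in>set (rows T). length (fst r) = length (cols T) \<and> (\<forall>v\<in>set (fst r). v < k)
           \<and> finite (snd r) \<and> snd r \<noteq> {})
     \<and> (rows T = [] \<longleftrightarrow> cols T = [])}"

definition row_matches :: "table \<Rightarrow> (nat \<times> nat) list \<Rightarrow> nat list \<Rightarrow> bool" where
  "row_matches T \<alpha> r = (\<forall>p\<in>set \<alpha>. map_of (zip (cols T) r) (fst p) = Some (snd p))"

definition subtab :: "table \<Rightarrow> (nat \<times> nat) list \<Rightarrow> table" where
  "subtab T \<alpha> = (let rs = filter (\<lambda>r. row_matches T \<alpha> (fst r)) (rows T)
                  in if rs = [] then Lam else (cols T, rs))"

definition keep_first :: "(nat list \<times> nat set) list \<Rightarrow> (nat list \<times> nat set) list" where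
  "keep_first rs = [rs ! i. i \<leftarrow> [0..<length rs], \<forall>j<i. fst (rs ! j) \<noteq> fst (rs ! i)]"

definition I_op :: "nat set \<Rightarrow> table \<Rightarrow> table" where
  "I_op D T = (if D = At T then Lam else
     (filter (\<lambda>a. a \<notin> D) (cols T),
      keep_first (map (\<lambda>r. ([fst r ! i. i \<leftarrow> [0..<length (cols T)], cols T ! i \<notin> D], snd r))
                      (rows T))))"

definition J_op :: "(nat list \<Rightarrow> nat set) \<Rightarrow> table \<Rightarrow> table" where
  "J_op \<nu> T = (cols T, map (\<lambda>r. (fst r, \<nu> (fst r))) (rows T))"

definition closure_tab :: "table \<Rightarrow> table set" where
  "closure_tab T = {J_op \<nu> (I_op D T) | D \<nu>. D \<subseteq> At T \<and> (\<forall>x. finite (\<nu> x) \<and> \<nu> x \<noteq> {})}"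

definition closure_cls :: "table set \<Rightarrow> table set" where
  "closure_cls A = (\<Union>T\<in>A. closure_tab T)"

definition closed_class :: "nat \<Rightarrow> table set \<Rightarrow> bool" where
  "closed_class k A \<longleftrightarrow> A \<noteq> {} \<and> A \<subseteq> M_k k \<and> closure_cls A = A"

text \<open>A (non-root) node: a terminal node labelled with a decision, or a node labelled
  with an attribute together with its outgoing edges (edge label, child).
  A k-decision tree is the list of subtrees hanging below the unlabelled root.\<close>
datatype dnode = Leaf nat | Node nat "(nat \<times> dnode) list"

type_synonym dtree = "dnode list"

inductive wf_node :: "nat \<Rightarrow> dnode \<Rightarrow> bool" for k where
  "wf_node k (Leaf d)"
| "cs \<noteq> [] \<Longrightarrow> (\<forall>p\<in>set cs. fst p < k \<and> wf_node k (snd p)) \<Longrightarrow> wf_node k (Node a cs)"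

inductive det_node :: "dnode \<Rightarrow> bool" where
  "det_node (Leaf d)"
| "distinct (map fst cs) \<Longrightarrow> (\<forall>p\<in>set cs. det_node (snd p)) \<Longrightarrow> det_node (Node a cs)"

definition k_tree :: "nat \<Rightarrow> dtree \<Rightarrow> bool" where
  "k_tree k \<Gamma> \<longleftrightarrow> \<Gamma> \<noteq> [] \<and> (\<forall>t\<in>set \<Gamma>. wf_node k t)"

inductive has_attr :: "dnode \<Rightarrow> nat \<Rightarrow> bool" where
  "has_attr (Node a cs) a"
| "p \<in> set cs \<Longrightarrow> has_attr (snd p) b \<Longrightarrow> has_attr (Node a cs) b"

definition At_tree :: "dtree \<Rightarrow> nat set" where
  "At_tree \<Gamma> = {a. \<exists>t\<in>set \<Gamma>. has_attr t a}"

inductive path_of :: "dnode \<Rightarrow> (nat \<times> nat) list \<Rightarrow> nat \<Rightarrow> bool" where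
  "path_of (Leaf d) [] d"
| "p \<in> set cs \<Longrightarrow> path_of (snd p) w d \<Longrightarrow> path_of (Node a cs) ((a, fst p) # w) d"

definition complete_path :: "dtree \<Rightarrow> (nat \<times> nat) list \<Rightarrow> nat \<Rightarrow> bool" where
  "complete_path \<Gamma> w d \<longleftrightarrow> (\<exists>t\<in>set \<Gamma>. path_of t w d)"

definition ndet_tree_for :: "nat \<Rightarrow> table \<Rightarrow> dtree \<Rightarrow> bool" where
  "ndet_tree_for k T \<Gamma> \<longleftrightarrow> k_tree k \<Gamma> \<and> At_tree \<Gamma> \<subseteq> At T
     \<and> (\<forall>r\<in>set (rows T). \<exists>w d. complete_path \<Gamma> w d \<and> r \<in> set (rows (subtab T w)))
     \<and> (\<forall>w d. complete_path \<Gamma> w d \<longrightarrow> subtab T w = Lam \<or> d \<in> Pi_tab (subtab T w))"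

definition det_tree_for :: "nat \<Rightarrow> table \<Rightarrow> dtree \<Rightarrow> bool" where
  "det_tree_for k T \<Gamma> \<longleftrightarrow> ndet_tree_for k T \<Gamma> \<and> length \<Gamma> = 1 \<and> (\<forall>t\<in>set \<Gamma>. det_node t)"

definition partially_bounded_cm :: "(nat list \<Rightarrow> nat) \<Rightarrow> bool" where
  "partially_bounded_cm \<psi> \<longleftrightarrow>
     (\<forall>w. \<psi> w = 0 \<longleftrightarrow> w = [])
   \<and> (\<forall>w w'. mset w = mset w' \<longrightarrow> \<psi> w = \<psi> w')
   \<and> (\<forall>w w'. \<psi> w \<le> \<psi> (w @ w'))
   \<and> (\<forall>w w'. \<psi> (w @ w') \<le> \<psi> w + \<psi> w')"

definition bounded_cm :: "(nat list \<Rightarrow> nat) \<Rightarrow> bool" where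
  "bounded_cm \<psi> \<longleftrightarrow> partially_bounded_cm \<psi> \<and> (\<forall>w. length w \<le> \<psi> w)"

definition psi_tree :: "(nat list \<Rightarrow> nat) \<Rightarrow> dtree \<Rightarrow> nat" where
  "psi_tree \<psi> \<Gamma> = Max {\<psi> (map fst w) | w d. complete_path \<Gamma> w d}"

definition psi_d :: "nat \<Rightarrow> (nat list \<Rightarrow> nat) \<Rightarrow> table \<Rightarrow> nat" where
  "psi_d k \<psi> T = (if T = Lam then 0 else LEAST m. \<exists>\<Gamma>. det_tree_for k T \<Gamma> \<and> psi_tree \<psi> \<Gamma> = m)"

definition psi_a :: "nat \<Rightarrow> (nat list \<Rightarrow> nat) \<Rightarrow> table \<Rightarrow> nat" where
  "psi_a k \<psi> T = (if T = Lam then 0 else LEAST m. \<exists>\<Gamma>. ndet_tree_for k T \<Gamma> \<and> psi_tree \<psi> \<Gamma> = m)"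

text \<open>H^infinity_{psi,A}(n): None = undefined.\<close>
definition H_fun :: "nat \<Rightarrow> (nat list \<Rightarrow> nat) \<Rightarrow> table set \<Rightarrow> nat \<Rightarrow> nat option" where
  "H_fun k \<psi> A n = (let S = {psi_d k \<psi> T | T. T \<in> A \<and> psi_a k \<psi> T \<le> n}
                     in if finite S then Some (Max S) else None)"

definition everywhere_defined :: "nat \<Rightarrow> (nat list \<Rightarrow> nat) \<Rightarrow> table set \<Rightarrow> bool" where
  "everywhere_defined k \<psi> A \<longleftrightarrow> (\<forall>n. H_fun k \<psi> A n \<noteq> None)"

end

theory Submission
  imports Defs "HOL-Library.Nat_Bijection"
begin

text \<open>Attributes are split into groups: group m consists of \<open>\<phi>(m)+1\<close> attributes, and the
  measure charges a word the maximum of its length and of the largest group index occurring in it.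
  The class consists of the tables whose attributes all lie in one group m \<open>\<ge> 1\<close>.  If such a
  table has no common decision, every nondeterministic decision tree must query an attribute, so
  \<open>\<psi>\<^sup>a \<ge> m\<close>; querying all columns is a deterministic tree of cost at most
  \<open>max(\<phi>(m)+1, m)\<close>, hence \<open>\<psi>\<^sup>d \<le> \<phi>(n)+n\<close> whenever \<open>\<psi>\<^sup>a \<le> n\<close>.  Conversely, the table over
  group n whose rows are the \<open>\<phi>(n)+1\<close> unit vectors, row i having decision i, satisfies
  \<open>\<psi>\<^sup>a \<le> n\<close> (guess the position of the 1), while an adversary answering 0 forces every
  deterministic tree to make \<open>\<phi>(n)\<close> queries.\<close>

section \<open>The complexity measure\<close>

text \<open>Attribute a stands for the pair (group, index) it encodes under \<open>prod_encode\<close>.\<close>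

definition attr_group :: "nat \<Rightarrow> nat" where
  "attr_group a = fst (prod_decode a)"

definition group_cm :: "nat list \<Rightarrow> nat" where
  "group_cm w = max (length w) (Max (insert 0 (attr_group ` set w)))"

lemma length_le_group_cm: "length w \<le> group_cm w"
  by (simp add: group_cm_def)

lemma attr_group_le_group_cm: "a \<in> set w \<Longrightarrow> attr_group a \<le> group_cm w"
  by (simp add: group_cm_def le_max_iff_disj)

lemma group_cm_le:
  assumes "length w \<le> l" and "\<forall>a\<in>set w. attr_group a \<le> m"
  shows "group_cm w \<le> max l m"
  using assms unfolding group_cm_def by (intro max.mono) auto

lemma bounded_cm_group_cm: "bounded_cm group_cm"
  unfolding bounded_cm_def partially_bounded_cm_def
proof (intro conjI allI impI)
  fix w :: "nat list"
  show "group_cm w = 0 \<longleftrightarrow> w = []"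
    by (cases w) (auto simp: group_cm_def)
  show "length w \<le> group_cm w"
    by (rule length_le_group_cm)
next
  fix w w' :: "nat list"
  assume "mset w = mset w'"
  then have "set w = set w'" "length w = length w'"
    by (metis set_mset_mset, metis size_mset)
  then show "group_cm w = group_cm w'"
    by (simp add: group_cm_def)
next
  fix w w' :: "nat list"
  show "group_cm w \<le> group_cm (w @ w')"
    unfolding group_cm_def by (intro max.mono Max_mono) auto
  have "length (w @ w') \<le> group_cm w + group_cm w'"
    using length_le_group_cm[of w] length_le_group_cm[of w'] by simp
  moreover have "\<forall>a\<in>set (w @ w'). attr_group a \<le> group_cm w + group_cm w'"
    using attr_group_le_group_cm[of _ w] attr_group_le_group_cm[of _ w'] by (auto intro: trans_le_add1 trans_le_add2)
  ultimately have "group_cm (w @ w') \<le> max (group_cm w + group_cm w') (group_cm w + group_cm w')"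
    by (rule group_cm_le)
  then show "group_cm (w @ w') \<le> group_cm w + group_cm w'"
    by simp
qed

section \<open>Closure of tables under the operations I and J\<close>

lemma concat_map_if_singleton:
  "concat (map (\<lambda>i. if P i then [f i] else []) xs) = map f (filter P xs)"
  by (induction xs) auto

lemma keep_first_conv_filter:
  "keep_first rs = map (nth rs) (filter (\<lambda>i. \<forall>j<i. fst (rs ! j) \<noteq> fst (rs ! i)) [0..<length rs])"
  unfolding keep_first_def by (simp add: concat_map_if_singleton)

lemma set_keep_first_subset: "set (keep_first rs) \<subseteq> set rs"
  by (auto simp: keep_first_conv_filter)

lemma keep_first_not_Nil: "rs \<noteq> [] \<Longrightarrow> keep_first rs \<noteq> []"
  by (auto simp: keep_first_conv_filter filter_empty_conv)

lemma distinct_map_fst_keep_first: "distinct (map fst (keep_first rs))"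
proof -
  let ?P = "\<lambda>i. \<forall>j<i. fst (rs ! j) \<noteq> fst (rs ! i)"
  have "inj_on (\<lambda>i. fst (rs ! i)) (set (filter ?P [0..<length rs]))"
  proof (rule inj_onI)
    fix i j
    assume "i \<in> set (filter ?P [0..<length rs])" "j \<in> set (filter ?P [0..<length rs])"
      and "fst (rs ! i) = fst (rs ! j)"
    then show "i = j" by (cases i j rule: linorder_cases) auto
  qed
  then show ?thesis by (simp add: keep_first_conv_filter distinct_map comp_def)
qed

lemma keep_first_id: "distinct (map fst rs) \<Longrightarrow> keep_first rs = rs"
  unfolding keep_first_conv_filter
  by (subst filter_True) (auto simp: distinct_conv_nth map_nth)

lemma length_filter_nth:
  "length (filter (\<lambda>i. xs ! i \<notin> D) [0..<length xs]) = length (filter (\<lambda>a. a \<notin> D) xs)"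
proof -
  have "filter (\<lambda>a. a \<notin> D) xs = filter (\<lambda>a. a \<notin> D) (map (nth xs) [0..<length xs])"
    by (simp add: map_nth)
  also have "\<dots> = map (nth xs) (filter (\<lambda>i. xs ! i \<notin> D) [0..<length xs])"
    by (simp add: filter_map comp_def)
  finally show ?thesis by simp
qed

lemma Lam_in_M_k: "Lam \<in> M_k k"
  by (simp add: M_k_def Lam_def cols_def rows_def)

lemma M_k_not_Lam: "T \<in> M_k k \<Longrightarrow> T \<noteq> Lam \<Longrightarrow> rows T \<noteq> [] \<and> cols T \<noteq> []"
  by (cases T) (auto simp: M_k_def Lam_def cols_def rows_def)

lemma J_op_in_M_k: "T \<in> M_k k \<Longrightarrow> \<forall>x. finite (\<nu> x) \<and> \<nu> x \<noteq> {} \<Longrightarrow> J_op \<nu> T \<in> M_k k"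
  by (auto simp: M_k_def J_op_def cols_def rows_def comp_def)

lemma I_op_in_M_k:
  assumes T: "T \<in> M_k k" and D: "D \<subseteq> At T"
  shows "I_op D T \<in> M_k k"
proof (cases "D = At T")
  case True
  then show ?thesis by (simp add: I_op_def Lam_in_M_k)
next
  case False
  then obtain a where a: "a \<in> set (cols T)" "a \<notin> D"
    using D by (auto simp: At_def)
  then have "rows T \<noteq> []"
    using T by (auto simp: M_k_def)
  let ?proj = "\<lambda>r. [r ! i. i \<leftarrow> [0..<length (cols T)], cols T ! i \<notin> D]"
  let ?cs = "filter (\<lambda>a. a \<notin> D) (cols T)"
  let ?rs = "map (\<lambda>r. (?proj (fst r), snd r)) (rows T)"
  have I: "I_op D T = (?cs, keep_first ?rs)"
    using False by (simp add: I_op_def)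
  have "?cs \<noteq> []"
    using a by (auto simp: filter_empty_conv)
  moreover have "keep_first ?rs \<noteq> []"
    using \<open>rows T \<noteq> []\<close> by (intro keep_first_not_Nil) simp
  moreover have "length (fst r) = length ?cs \<and> (\<forall>v\<in>set (fst r). v < k) \<and> finite (snd r) \<and> snd r \<noteq> {}"
    if "r \<in> set (keep_first ?rs)" for r
  proof -
    from that set_keep_first_subset obtain r0 where r0: "r0 \<in> set (rows T)" and r: "r = (?proj (fst r0), snd r0)"
      by fastforce
    have "length (fst r0) = length (cols T)" "\<forall>v\<in>set (fst r0). v < k" "finite (snd r0)" "snd r0 \<noteq> {}"
      using T r0 by (auto simp: M_k_def)
    then show ?thesis
      by (auto simp: r length_filter_nth concat_map_if_singleton)
  qed
  ultimately show ?thesis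
    using T unfolding I by (simp add: M_k_def cols_def rows_def distinct_map_fst_keep_first)
qed

lemma set_cols_J_op_I_op: "set (cols (J_op \<nu> (I_op D T))) \<subseteq> set (cols T)"
  by (auto simp: J_op_def I_op_def cols_def Lam_def)

lemma self_in_closure_tab:
  assumes T: "T \<in> M_k k"
  shows "T \<in> closure_tab T"
proof (cases "T = Lam")
  case True
  have "J_op (\<lambda>_. {0}) (I_op {} Lam) = Lam"
    by (simp add: I_op_def J_op_def At_def Lam_def cols_def rows_def)
  then show ?thesis
    unfolding closure_tab_def True by (intro CollectI exI[of _ "{}"] exI[of _ "\<lambda>_. {0::nat}"]) auto
next
  case False
  have dr: "distinct (map fst (rows T))"
    and len: "\<And>r. r \<in> set (rows T) \<Longrightarrow> length (fst r) = length (cols T)"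
    using T by (auto simp: M_k_def)
  define \<nu> where "\<nu> x = (case map_of (rows T) x of None \<Rightarrow> {0} | Some s \<Rightarrow> s)" for x
  have \<nu>: "\<forall>x. finite (\<nu> x) \<and> \<nu> x \<noteq> {}"
  proof
    fix x
    show "finite (\<nu> x) \<and> \<nu> x \<noteq> {}"
    proof (cases "map_of (rows T) x")
      case (Some s)
      then have "(x, s) \<in> set (rows T)" by (rule map_of_SomeD)
      then show ?thesis using T Some by (force simp: \<nu>_def M_k_def)
    qed (simp add: \<nu>_def)
  qed
  have J_rows: "map (\<lambda>r. (fst r, \<nu> (fst r))) (rows T) = rows T"
  proof (rule map_idI)
    fix r
    assume "r \<in> set (rows T)"
    then have "map_of (rows T) (fst r) = Some (snd r)"
      using dr by simp
    then show "(fst r, \<nu> (fst r)) = r" by (simp add: \<nu>_def)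
  qed
  have "At T \<noteq> {}"
    using M_k_not_Lam[OF T False] by (simp add: At_def)
  moreover have "map (\<lambda>r. (map ((!) (fst r)) [0..<length (cols T)], snd r)) (rows T) = rows T"
    by (rule map_idI) (metis len map_nth prod.collapse)
  ultimately have "I_op {} T = (cols T, rows T)"
    by (simp add: I_op_def concat_map_if_singleton keep_first_id dr)
  with J_rows have "J_op \<nu> (I_op {} T) = T"
    by (simp add: J_op_def cols_def rows_def)
  then show ?thesis
    unfolding closure_tab_def using \<nu> by (intro CollectI exI[of _ "{}"] exI[of _ \<nu>]) auto
qed

section \<open>The class of single-group tables\<close>

definition group_attrs :: "(nat \<Rightarrow> nat) \<Rightarrow> nat \<Rightarrow> nat list" where
  "group_attrs \<phi> m = map (\<lambda>j. prod_encode (m, j)) [0..<Suc (\<phi> m)]"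

text \<open>Groups start at 1 so that a query of a group m attribute costs exactly m.\<close>

definition group_tables :: "nat \<Rightarrow> (nat \<Rightarrow> nat) \<Rightarrow> table set" where
  "group_tables k \<phi> = {T \<in> M_k k. \<exists>m\<ge>1. set (cols T) \<subseteq> set (group_attrs \<phi> m)}"

lemma distinct_group_attrs: "distinct (group_attrs \<phi> m)"
  by (simp add: group_attrs_def distinct_map inj_on_def del: upt_Suc)

lemma length_group_attrs: "length (group_attrs \<phi> m) = Suc (\<phi> m)"
  by (simp add: group_attrs_def)

lemma attr_group_group_attrs: "a \<in> set (group_attrs \<phi> m) \<Longrightarrow> attr_group a = m"
  by (auto simp: group_attrs_def attr_group_def)

lemma Lam_in_group_tables: "Lam \<in> group_tables k \<phi>"
  using Lam_in_M_k[of k] by (auto simp: group_tables_def Lam_def cols_def intro: exI[of _ 1])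

lemma closed_class_group_tables: "closed_class k (group_tables k \<phi>)"
  unfolding closed_class_def
proof (intro conjI)
  show "group_tables k \<phi> \<noteq> {}"
    using Lam_in_group_tables by blast
  show "group_tables k \<phi> \<subseteq> M_k k"
    by (auto simp: group_tables_def)
  show "closure_cls (group_tables k \<phi>) = group_tables k \<phi>"
  proof
    show "group_tables k \<phi> \<subseteq> closure_cls (group_tables k \<phi>)"
      using self_in_closure_tab by (force simp: closure_cls_def group_tables_def)
    show "closure_cls (group_tables k \<phi>) \<subseteq> group_tables k \<phi>"
    proof
      fix X
      assume "X \<in> closure_cls (group_tables k \<phi>)"
      then obtain T D \<nu> where T: "T \<in> group_tables k \<phi>" and X: "X = J_op \<nu> (I_op D T)"
        and D: "D \<subseteq> At T" and \<nu>: "\<forall>x. finite (\<nu> x) \<and> \<nu> x \<noteq> {}"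
        by (auto simp: closure_cls_def closure_tab_def)
      then have "X \<in> M_k k"
        by (auto simp: group_tables_def intro!: J_op_in_M_k I_op_in_M_k)
      then show "X \<in> group_tables k \<phi>"
        using T set_cols_J_op_I_op[of \<nu> D T] unfolding X group_tables_def by blast
    qed
  qed
qed

lemma rows_subtab: "rows (subtab T w) = filter (\<lambda>r. row_matches T w (fst r)) (rows T)"
  by (simp add: subtab_def Let_def Lam_def rows_def)

lemma subtab_eq_Lam_iff: "subtab T w = Lam \<longleftrightarrow> filter (\<lambda>r. row_matches T w (fst r)) (rows T) = []"
  by (auto simp: subtab_def Let_def Lam_def)

lemma row_matches_Nil: "row_matches T [] x"
  by (simp add: row_matches_def)

lemma row_matches_Cons:
  "row_matches T ((a, v) # w) x \<longleftrightarrow> map_of (zip (cols T) x) a = Some v \<and> row_matches T w x"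
  by (simp add: row_matches_def)

lemma subtab_not_Lam: "r \<in> set (rows (subtab T w)) \<Longrightarrow> subtab T w \<noteq> Lam"
  by (auto simp: Lam_def rows_def)

lemma subtab_Nil: "rows T \<noteq> [] \<Longrightarrow> subtab T [] = T"
  by (simp add: subtab_def row_matches_Nil cols_def rows_def)

lemma map_of_zip_SomeD: "map_of (zip cs x) a = Some v \<Longrightarrow> a \<in> set cs"
  by (auto dest!: map_of_SomeD set_zip_leftD)

lemma row_matches_zip_self:
  "distinct (cols T) \<Longrightarrow> length x = length (cols T) \<Longrightarrow> row_matches T (zip (cols T) x) x"
  unfolding row_matches_def by (auto intro: map_of_is_SomeI)

lemma row_matches_zip_eq:
  assumes "distinct (cols T)" "length x = length (cols T)" "length v = length (cols T)"
    and "row_matches T (zip (cols T) v) x"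
  shows "x = v"
proof (rule nth_equalityI)
  show "length x = length v" using assms by simp
  fix i
  assume i: "i < length x"
  then have "(cols T ! i, v ! i) \<in> set (zip (cols T) v)"
    using assms by (auto simp: in_set_zip)
  then have "map_of (zip (cols T) x) (cols T ! i) = Some (v ! i)"
    using assms(4) by (auto simp: row_matches_def)
  then show "x ! i = v ! i"
    using assms i by (simp add: map_of_zip_nth)
qed

text \<open>A word assigning values to all columns selects at most one row.\<close>

lemma subtab_full_word:
  assumes T: "T \<in> M_k k" and v: "length v = length (cols T)"
  shows "subtab T (zip (cols T) v) = Lam \<or> Pi_tab (subtab T (zip (cols T) v)) \<noteq> {}"
proof (cases "subtab T (zip (cols T) v) = Lam")
  case False
  let ?rs = "filter (\<lambda>r. row_matches T (zip (cols T) v) (fst r)) (rows T)"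
  have dc: "distinct (cols T)" and dr: "distinct (map fst (rows T))"
    and rl: "\<And>r. r \<in> set (rows T) \<Longrightarrow> length (fst r) = length (cols T) \<and> snd r \<noteq> {}"
    using T by (auto simp: M_k_def)
  from False obtain r0 where r0: "r0 \<in> set ?rs"
    by (metis subtab_eq_Lam_iff hd_in_set)
  have fst_v: "fst r = v" if "r \<in> set ?rs" for r
    using that rl[of r] dc v by (intro row_matches_zip_eq) auto
  have "r = r0" if "r \<in> set ?rs" for r
    using fst_v[OF that] fst_v[OF r0] that r0 dr by (auto simp: distinct_map inj_on_def)
  then have "set ?rs = {r0}"
    using r0 by blast
  moreover have "snd r0 \<noteq> {}"
    using r0 rl by auto
  ultimately show ?thesis
    by (simp add: Pi_tab_def rows_subtab)
qed simp

section \<open>Decision trees and their complexity\<close>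

lemma finite_paths: "finite {w. \<exists>d. path_of t w d}"
proof (induction t)
  case (Leaf x)
  have "{w. \<exists>d. path_of (Leaf x) w d} \<subseteq> {[]}"
    by (auto elim: path_of.cases)
  then show ?case by (rule finite_subset) simp
next
  case (Node a cs)
  have "{w. \<exists>d. path_of (Node a cs) w d} \<subseteq> (\<Union>p\<in>set cs. Cons (a, fst p) ` {w. \<exists>d. path_of (snd p) w d})"
  proof
    fix w
    assume "w \<in> {w. \<exists>d. path_of (Node a cs) w d}"
    then obtain d where "path_of (Node a cs) w d" by blast
    then show "w \<in> (\<Union>p\<in>set cs. Cons (a, fst p) ` {w. \<exists>d. path_of (snd p) w d})"
      by (cases rule: path_of.cases) auto
  qed
  moreover have "finite {w. \<exists>d. path_of (snd p) w d}" if "p \<in> set cs" for p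
    using Node.IH[OF that] by (cases p) simp
  ultimately show ?case
    by (meson finite_UN_I finite_imageI finite_set finite_subset)
qed

lemma psi_tree_ge: "complete_path \<Gamma> w d \<Longrightarrow> \<psi> (map fst w) \<le> psi_tree \<psi> \<Gamma>"
proof -
  assume w: "complete_path \<Gamma> w d"
  have "{\<psi> (map fst w) |w d. complete_path \<Gamma> w d} = (\<lambda>w. \<psi> (map fst w)) ` (\<Union>t\<in>set \<Gamma>. {w. \<exists>d. path_of t w d})"
    by (auto simp: complete_path_def)
  then have "finite {\<psi> (map fst w) |w d. complete_path \<Gamma> w d}"
    using finite_paths by simp
  then show ?thesis
    unfolding psi_tree_def using w by (intro Max_ge) auto
qed

lemma psi_tree_eqI:
  assumes "complete_path \<Gamma> w0 d0" and "\<And>w d. complete_path \<Gamma> w d \<Longrightarrow> \<psi> (map fst w) = c"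
  shows "psi_tree \<psi> \<Gamma> = c"
proof -
  have "{\<psi> (map fst w) |w d. complete_path \<Gamma> w d} = {c}"
    using assms by fastforce
  then show ?thesis by (simp add: psi_tree_def)
qed

lemma psi_d_le: "det_tree_for k T \<Gamma> \<Longrightarrow> psi_d k \<psi> T \<le> psi_tree \<psi> \<Gamma>"
  by (auto simp: psi_d_def intro: Least_le)

lemma psi_a_le: "ndet_tree_for k T \<Gamma> \<Longrightarrow> psi_a k \<psi> T \<le> psi_tree \<psi> \<Gamma>"
  by (auto simp: psi_a_def intro: Least_le)

lemma psi_d_attained:
  assumes "T \<noteq> Lam" and "det_tree_for k T \<Gamma>"
  shows "\<exists>\<Gamma>'. det_tree_for k T \<Gamma>' \<and> psi_tree \<psi> \<Gamma>' = psi_d k \<psi> T"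
proof -
  have "\<exists>m \<Gamma>. det_tree_for k T \<Gamma> \<and> psi_tree \<psi> \<Gamma> = m"
    using assms(2) by blast
  from LeastI_ex[OF this] show ?thesis
    using assms(1) by (simp add: psi_d_def)
qed

lemma psi_a_attained:
  assumes "T \<noteq> Lam" and "ndet_tree_for k T \<Gamma>"
  shows "\<exists>\<Gamma>'. ndet_tree_for k T \<Gamma>' \<and> psi_tree \<psi> \<Gamma>' = psi_a k \<psi> T"
proof -
  have "\<exists>m \<Gamma>. ndet_tree_for k T \<Gamma> \<and> psi_tree \<psi> \<Gamma> = m"
    using assms(2) by blast
  from LeastI_ex[OF this] show ?thesis
    using assms(1) by (simp add: psi_a_def)
qed

text \<open>The
  leaf choice is arbitrary if the subtable reached has no common decision; by
  subtab_full_word this never matters when all columns are queried.\<close>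

fun query_all :: "nat \<Rightarrow> table \<Rightarrow> nat list \<Rightarrow> (nat \<times> nat) list \<Rightarrow> dnode" where
  "query_all k T [] w = Leaf (SOME d. d \<in> Pi_tab (subtab T w))"
| "query_all k T (a # as) w = Node a (map (\<lambda>v. (v, query_all k T as (w @ [(a, v)]))) [0..<k])"

lemma path_of_query_allD:
  "path_of (query_all k T as w0) w d \<Longrightarrow> map fst w = as \<and> d = (SOME d. d \<in> Pi_tab (subtab T (w0 @ w)))"
proof (induction as arbitrary: w0 w)
  case Nil
  then show ?case by (auto elim: path_of.cases)
next
  case (Cons a as)
  from Cons.prems obtain p w' where w: "w = (a, fst p) # w'" and pw: "path_of (snd p) w' d"
    and p: "p \<in> set (map (\<lambda>v. (v, query_all k T as (w0 @ [(a, v)]))) [0..<k])"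
    by (auto elim: path_of.cases)
  from p obtain v where "p = (v, query_all k T as (w0 @ [(a, v)]))"
    by auto
  with Cons.IH[of "w0 @ [(a, v)]" w'] pw show ?case
    by (simp add: w)
qed

lemma path_of_query_all:
  "length v = length as \<Longrightarrow> \<forall>x\<in>set v. x < k \<Longrightarrow>
   path_of (query_all k T as w0) (zip as v) (SOME d. d \<in> Pi_tab (subtab T (w0 @ zip as v)))"
proof (induction as arbitrary: v w0)
  case Nil
  then show ?case by (auto intro: path_of.intros)
next
  case (Cons a as)
  then obtain x v' where v: "v = x # v'" by (cases v) auto
  have "(x, query_all k T as (w0 @ [(a, x)])) \<in> set (map (\<lambda>v. (v, query_all k T as (w0 @ [(a, v)]))) [0..<k])"
    using Cons.prems by (auto simp: v)
  from path_of.intros(2)[OF this] Cons.IH[of v' "w0 @ [(a, x)]"] Cons.prems show ?case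
    by (simp add: v)
qed

lemma wf_node_query_all: "0 < k \<Longrightarrow> wf_node k (query_all k T as w0)"
proof (induction as arbitrary: w0)
  case Nil
  show ?case by (simp add: wf_node.intros(1))
next
  case (Cons a as)
  show ?case unfolding query_all.simps
    by (rule wf_node.intros(2)) (use Cons in auto)
qed

lemma det_node_query_all: "det_node (query_all k T as w0)"
proof (induction as arbitrary: w0)
  case Nil
  show ?case by (simp add: det_node.intros(1))
next
  case (Cons a as)
  show ?case unfolding query_all.simps
    by (intro det_node.intros(2)) (use Cons in \<open>auto simp: comp_def\<close>)
qed

lemma has_attr_query_all: "has_attr (query_all k T as w0) b \<Longrightarrow> b \<in> set as"
proof (induction as arbitrary: w0)
  case Nil
  then show ?case by (auto elim: has_attr.cases)
next
  case (Cons a as)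
  from Cons.prems show ?case
    unfolding query_all.simps
  proof (cases rule: has_attr.cases)
    case (2 p)
    then show ?thesis using Cons.IH by (auto, blast)
  qed simp
qed

lemma det_tree_for_query_all:
  assumes T: "T \<in> M_k k" and k: "0 < k"
  shows "det_tree_for k T [query_all k T (cols T) []]"
proof -
  let ?t = "query_all k T (cols T) []"
  have dc: "distinct (cols T)"
    and rl: "\<And>r. r \<in> set (rows T) \<Longrightarrow> length (fst r) = length (cols T) \<and> (\<forall>v\<in>set (fst r). v < k)"
    using T by (auto simp: M_k_def)
  have "\<exists>w d. complete_path [?t] w d \<and> r \<in> set (rows (subtab T w))" if r: "r \<in> set (rows T)" for r
  proof -
    have "path_of ?t (zip (cols T) (fst r)) (SOME d. d \<in> Pi_tab (subtab T (zip (cols T) (fst r))))"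
      using rl[OF r] path_of_query_all[of "fst r" "cols T" k T "[]"] by simp
    moreover have "r \<in> set (rows (subtab T (zip (cols T) (fst r))))"
      using r rl[OF r] dc by (simp add: rows_subtab row_matches_zip_self)
    ultimately show ?thesis by (auto simp: complete_path_def)
  qed
  moreover have "subtab T w = Lam \<or> d \<in> Pi_tab (subtab T w)" if "complete_path [?t] w d" for w d
  proof -
    from that have "map fst w = cols T" and d: "d = (SOME d. d \<in> Pi_tab (subtab T w))"
      using path_of_query_allD[of k T "cols T" "[]"] by (auto simp: complete_path_def)
    then have "w = zip (cols T) (map snd w)" "length (map snd w) = length (cols T)"
      by (metis zip_map_fst_snd, metis length_map)
    then have "subtab T w = Lam \<or> Pi_tab (subtab T w) \<noteq> {}"
      by (metis T subtab_full_word)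
    then show ?thesis
      unfolding d by (metis ex_in_conv someI_ex)
  qed
  moreover have "At_tree [?t] \<subseteq> At T"
    using has_attr_query_all[of k T "cols T" "[]"] by (auto simp: At_tree_def At_def)
  ultimately show ?thesis
    unfolding det_tree_for_def ndet_tree_for_def k_tree_def
    using wf_node_query_all[OF k] det_node_query_all by auto
qed

lemma psi_tree_query_all:
  assumes T: "T \<in> M_k k" and "T \<noteq> Lam" and "0 < k"
  shows "psi_tree \<psi> [query_all k T (cols T) []] = \<psi> (cols T)"
proof -
  obtain r where r: "r \<in> set (rows T)"
    using M_k_not_Lam[OF assms(1,2)] by (cases "rows T") auto
  then obtain w d where "complete_path [query_all k T (cols T) []] w d"
    using det_tree_for_query_all[OF T \<open>0 < k\<close>] by (auto simp: det_tree_for_def ndet_tree_for_def)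
  then show ?thesis
    by (rule psi_tree_eqI) (auto simp: complete_path_def dest: path_of_query_allD[of k T "cols T" "[]"])
qed

lemma psi_d_le_cols:
  assumes "T \<in> M_k k" and "0 < k"
  shows "psi_d k \<psi> T \<le> \<psi> (cols T)"
proof (cases "T = Lam")
  case False
  then show ?thesis
    using psi_d_le[OF det_tree_for_query_all[OF assms]] psi_tree_query_all[OF assms(1) False assms(2)] by simp
qed (simp add: psi_d_def)

lemma psi_a_attained_M_k:
  assumes "T \<in> M_k k" and "T \<noteq> Lam" and "0 < k"
  shows "\<exists>\<Gamma>. ndet_tree_for k T \<Gamma> \<and> psi_tree \<psi> \<Gamma> = psi_a k \<psi> T"
  using det_tree_for_query_all[OF assms(1,3)] psi_a_attained[OF assms(2)] by (auto simp: det_tree_for_def)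

lemma psi_d_attained_M_k:
  assumes "T \<in> M_k k" and "T \<noteq> Lam" and "0 < k"
  shows "\<exists>\<Gamma>. det_tree_for k T \<Gamma> \<and> psi_tree \<psi> \<Gamma> = psi_d k \<psi> T"
  using det_tree_for_query_all[OF assms(1,3)] psi_d_attained[OF assms(2)] by blast

lemma psi_d_le_Nil:
  assumes "rows T \<noteq> []" and "d \<in> Pi_tab T"
  shows "psi_d k \<psi> T \<le> \<psi> []"
proof -
  have cp: "complete_path [Leaf d] w d' \<longleftrightarrow> w = [] \<and> d' = d" for w d'
    by (auto simp: complete_path_def elim: path_of.cases intro: path_of.intros)
  have "det_tree_for k T [Leaf d]"
    unfolding det_tree_for_def ndet_tree_for_def k_tree_def
    using assms subtab_Nil[OF assms(1)]
    by (auto simp: cp At_tree_def elim: has_attr.cases intro: wf_node.intros det_node.intros)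
  moreover have "psi_tree \<psi> [Leaf d] = \<psi> []"
    by (rule psi_tree_eqI[of _ "[]" d]) (auto simp: cp)
  ultimately show ?thesis
    using psi_d_le by metis
qed

text \<open>A row is routed to some complete path; were that path empty, its decision would be common to
  all of T.\<close>

lemma ndet_tree_for_queries_column:
  assumes "Pi_tab T = {}" and "ndet_tree_for k T \<Gamma>"
  shows "\<exists>w d a. complete_path \<Gamma> w d \<and> a \<in> fst ` set w \<and> a \<in> set (cols T)"
proof -
  obtain r where r: "r \<in> set (rows T)"
    using assms(1) by (cases "rows T") (auto simp: Pi_tab_def)
  then obtain w d where cp: "complete_path \<Gamma> w d" and rw: "r \<in> set (rows (subtab T w))"
    using assms(2) by (auto simp: ndet_tree_for_def)
  have "subtab T w \<noteq> Lam"
    using rw by (rule subtab_not_Lam)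
  then have "d \<in> Pi_tab (subtab T w)"
    using assms(2) cp by (auto simp: ndet_tree_for_def)
  moreover have "rows T \<noteq> []"
    using r by auto
  ultimately have "w \<noteq> []"
    using assms(1) subtab_Nil[of T] by auto
  then obtain a v w' where w: "w = (a, v) # w'"
    by (metis list.exhaust prod.exhaust)
  have "row_matches T w (fst r)"
    using rw by (simp add: rows_subtab)
  then have "map_of (zip (cols T) (fst r)) a = Some v"
    by (simp add: w row_matches_Cons)
  then have "a \<in> set (cols T)"
    by (rule map_of_zip_SomeD)
  then show ?thesis
    using cp w by force
qed

section \<open>Upper bound on the class\<close>

lemma psi_a_ge_attr_group:
  assumes T: "T \<in> M_k k" and k: "0 < k" and P: "Pi_tab T = {}"
    and g: "\<forall>a\<in>set (cols T). attr_group a = m"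
  shows "m \<le> psi_a k group_cm T"
proof -
  have "T \<noteq> Lam"
    using P by (auto simp: Lam_def Pi_tab_def rows_def)
  then obtain \<Gamma> where nd: "ndet_tree_for k T \<Gamma>" and opt: "psi_tree group_cm \<Gamma> = psi_a k group_cm T"
    using psi_a_attained_M_k[OF T _ k] by blast
  obtain w d a where cp: "complete_path \<Gamma> w d" and a: "a \<in> fst ` set w" "a \<in> set (cols T)"
    using ndet_tree_for_queries_column[OF P nd] by blast
  have "m = attr_group a"
    using g a by simp
  also have "\<dots> \<le> group_cm (map fst w)"
    using a by (intro attr_group_le_group_cm) simp
  also have "\<dots> \<le> psi_a k group_cm T"
    using psi_tree_ge[OF cp, of group_cm] opt by simp
  finally show ?thesis .
qed

lemma psi_d_group_tables_le:
  assumes mono: "mono \<phi>" and ge: "\<forall>n. n \<le> \<phi> n" and k: "0 < k"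
    and TA: "T \<in> group_tables k \<phi>" and pa: "psi_a k group_cm T \<le> n"
  shows "psi_d k group_cm T \<le> \<phi> n + n"
proof -
  from TA obtain m where m: "1 \<le> m" "set (cols T) \<subseteq> set (group_attrs \<phi> m)" and T: "T \<in> M_k k"
    by (auto simp: group_tables_def)
  show ?thesis
  proof (cases "Pi_tab T = {}")
    case False
    then obtain d where d: "d \<in> Pi_tab T" by blast
    have "psi_d k group_cm T \<le> group_cm []"
    proof (cases "T = Lam")
      case False
      then show ?thesis using psi_d_le_Nil M_k_not_Lam[OF T False] d by blast
    qed (simp add: psi_d_def)
    then show ?thesis by (simp add: group_cm_def)
  next
    case True
    have g: "\<forall>a\<in>set (cols T). attr_group a = m"
      using m attr_group_group_attrs by blast
    have mn: "m \<le> n"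
      using psi_a_ge_attr_group[OF T k True g] pa by simp
    have "length (cols T) = card (set (cols T))"
      using T by (simp add: M_k_def distinct_card)
    also have "\<dots> \<le> card (set (group_attrs \<phi> m))"
      using m by (intro card_mono) auto
    also have "\<dots> = Suc (\<phi> m)"
      by (simp add: distinct_card distinct_group_attrs length_group_attrs)
    finally have "group_cm (cols T) \<le> max (Suc (\<phi> m)) m"
      using g by (intro group_cm_le) simp_all
    moreover have "\<phi> m \<le> \<phi> n" "m \<le> \<phi> m"
      using mono mn ge by (simp_all add: mono_def)
    ultimately show ?thesis
      using psi_d_le_cols[OF T k, of group_cm] m(1) mn by simp
  qed
qed

section \<open>Tables of unit vectors\<close>

definition unit_vec :: "nat \<Rightarrow> nat \<Rightarrow> nat list" where
  "unit_vec r i = map (\<lambda>j. if j = i then 1 else 0) [0..<r]"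

definition unit_table :: "(nat \<Rightarrow> nat) \<Rightarrow> nat \<Rightarrow> table" where
  "unit_table \<phi> n = (group_attrs \<phi> n, map (\<lambda>i. (unit_vec (Suc (\<phi> n)) i, {i})) [0..<Suc (\<phi> n)])"

lemma length_unit_vec [simp]: "length (unit_vec r i) = r"
  by (simp add: unit_vec_def)

lemma nth_unit_vec: "j < r \<Longrightarrow> unit_vec r i ! j = (if j = i then 1 else 0)"
  by (simp add: unit_vec_def)

lemma unit_vec_inj: "i < r \<Longrightarrow> unit_vec r i = unit_vec r i' \<Longrightarrow> i = i'"
  by (metis nth_unit_vec zero_neq_one)

lemma map_of_zip_unit_vec:
  "distinct cs \<Longrightarrow> length cs = r \<Longrightarrow> j < r \<Longrightarrow>
   map_of (zip cs (unit_vec r i)) (cs ! j) = Some (if j = i then 1 else 0)"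
  by (simp add: map_of_zip_nth nth_unit_vec)

lemma cols_unit_table: "cols (unit_table \<phi> n) = group_attrs \<phi> n"
  by (simp add: unit_table_def cols_def)

lemma rows_unit_table:
  "rows (unit_table \<phi> n) = map (\<lambda>i. (unit_vec (Suc (\<phi> n)) i, {i})) [0..<Suc (\<phi> n)]"
  by (simp add: unit_table_def rows_def)

lemma unit_table_in_M_k: "2 \<le> k \<Longrightarrow> unit_table \<phi> n \<in> M_k k"
proof -
  assume k: "2 \<le> k"
  have "distinct (map (unit_vec (Suc (\<phi> n))) [0..<Suc (\<phi> n)])"
    by (auto simp: distinct_map inj_on_def dest: unit_vec_inj simp del: upt_Suc)
  moreover have "\<forall>i. \<forall>v\<in>set (unit_vec (Suc (\<phi> n)) i). v < k"
    using k by (auto simp: unit_vec_def)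
  moreover have "group_attrs \<phi> n \<noteq> []"
    using length_group_attrs[of \<phi> n] by (metis list.size(3) nat.distinct(1))
  ultimately show ?thesis
    unfolding M_k_def
    by (simp add: cols_unit_table rows_unit_table distinct_group_attrs length_group_attrs comp_def
        del: upt_Suc)
qed

lemma unit_table_not_Lam: "unit_table \<phi> n \<noteq> Lam"
  by (simp add: unit_table_def Lam_def group_attrs_def)

lemma unit_table_in_group_tables: "1 \<le> n \<Longrightarrow> 2 \<le> k \<Longrightarrow> unit_table \<phi> n \<in> group_tables k \<phi>"
  using unit_table_in_M_k by (auto simp: group_tables_def cols_unit_table)

lemma unit_row_in_subtab:
  "i < Suc (\<phi> n) \<Longrightarrow> row_matches (unit_table \<phi> n) w (unit_vec (Suc (\<phi> n)) i) \<Longrightarrow>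
   (unit_vec (Suc (\<phi> n)) i, {i}) \<in> set (rows (subtab (unit_table \<phi> n) w))"
  by (simp add: rows_subtab rows_unit_table del: upt_Suc)

lemma path_of_Node_zero:
  assumes "path_of (Node a cs) w d" and "row_matches T w x" and "map_of (zip (cols T) x) a = Some 0"
    and "distinct (map fst cs)" and "q \<in> set cs" and "fst q = 0"
  shows "\<exists>w'. w = (a, 0) # w' \<and> path_of (snd q) w' d \<and> row_matches T w' x"
proof -
  from assms(1) obtain p w' where w: "w = (a, fst p) # w'" and p: "p \<in> set cs" and pw: "path_of (snd p) w' d"
    by (cases rule: path_of.cases) auto
  with assms(2,3) have p0: "fst p = 0" and "row_matches T w' x"
    by (simp_all add: row_matches_Cons)
  moreover have "p = q"
    using assms(4-6) p p0 by (auto simp: distinct_map inj_on_def)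
  ultimately show ?thesis
    using w pw by auto
qed

text \<open>The adversary answers 0 wherever possible: at a node querying column j, every unit vector
  other than \<open>e\<^sub>j\<close> follows the unique 0-edge, so each query separates at most one candidate.\<close>

lemma det_node_unit_vec_path:
  assumes "det_node t" and dc: "distinct (cols T)" and lc: "length (cols T) = r"
  shows "I \<subseteq> {..<r} \<Longrightarrow> I \<noteq> {} \<Longrightarrow>
    (\<forall>i\<in>I. \<exists>w d. path_of t w d \<and> row_matches T w (unit_vec r i)) \<Longrightarrow>
    (\<forall>w d i. path_of t w d \<longrightarrow> i \<in> I \<longrightarrow> row_matches T w (unit_vec r i) \<longrightarrow> d = i) \<Longrightarrow>
    \<exists>w d. path_of t w d \<and> card I \<le> Suc (length w)"
  using assms(1)
proof (induction arbitrary: I rule: det_node.induct)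
  case (1 d)
  have "I \<subseteq> {d}"
    using "1.prems"(4) path_of.intros(1)[of d] row_matches_Nil[of T] by blast
  then have "card I \<le> 1"
    using card_mono[of "{d}" I] by simp
  then show ?case
    using path_of.intros(1)[of d] by force
next
  case (2 cs a)
  from "2.prems"(2,3) obtain i0 w0 d0 where p0: "path_of (Node a cs) w0 d0"
    and m0: "row_matches T w0 (unit_vec r i0)"
    by blast
  from p0 obtain v w0' where w0: "w0 = (a, v) # w0'"
    by (cases rule: path_of.cases) auto
  from m0 have "map_of (zip (cols T) (unit_vec r i0)) a = Some v"
    by (simp add: w0 row_matches_Cons)
  then have "a \<in> set (cols T)"
    by (rule map_of_zip_SomeD)
  then obtain j where j: "j < r" "a = cols T ! j"
    using lc by (auto simp: in_set_conv_nth)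
  show ?case
  proof (cases "I - {j} = {}")
    case True
    then have "card I \<le> 1"
      using card_mono[of "{j}" I] by auto
    then show ?thesis
      using p0 by force
  next
    case False
    let ?I = "I - {j}"
    have zero: "map_of (zip (cols T) (unit_vec r i)) a = Some 0" if "i \<in> ?I" for i
      using that j map_of_zip_unit_vec[OF dc lc] by auto
    from False obtain i1 where i1: "i1 \<in> ?I" by blast
    with "2.prems"(3) obtain w1 d1 where p1: "path_of (Node a cs) w1 d1"
      and m1: "row_matches T w1 (unit_vec r i1)"
      by blast
    from p1 obtain q w1' where w1: "w1 = (a, fst q) # w1'" and q: "q \<in> set cs"
      by (cases rule: path_of.cases) auto
    have q0: "fst q = 0"
      using m1 zero[OF i1] by (simp add: w1 row_matches_Cons)
    have follow: "\<exists>w'. w = (a, 0) # w' \<and> path_of (snd q) w' d \<and> row_matches T w' (unit_vec r i)"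
      if "path_of (Node a cs) w d" "row_matches T w (unit_vec r i)" "i \<in> ?I" for w d i
      using path_of_Node_zero[OF that(1,2) zero[OF that(3)] "2.hyps"(1) q q0] .
    have "\<forall>i\<in>?I. \<exists>w d. path_of (snd q) w d \<and> row_matches T w (unit_vec r i)"
    proof
      fix i
      assume i: "i \<in> ?I"
      with "2.prems"(3) obtain w d where "path_of (Node a cs) w d" "row_matches T w (unit_vec r i)"
        by blast
      from follow[OF this i] show "\<exists>w d. path_of (snd q) w d \<and> row_matches T w (unit_vec r i)"
        by blast
    qed
    moreover have "\<forall>w d i. path_of (snd q) w d \<longrightarrow> i \<in> ?I \<longrightarrow> row_matches T w (unit_vec r i) \<longrightarrow> d = i"
    proof (intro allI impI)
      fix w d i
      assume pw: "path_of (snd q) w d" and i: "i \<in> ?I" and m: "row_matches T w (unit_vec r i)"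
      have "path_of (Node a cs) ((a, fst q) # w) d"
        using path_of.intros(2)[OF q pw] .
      moreover have "row_matches T ((a, fst q) # w) (unit_vec r i)"
        using m zero[OF i] q0 by (simp add: row_matches_Cons)
      ultimately show "d = i"
        using "2.prems"(4) i by blast
    qed
    moreover have "?I \<subseteq> {..<r}"
      using "2.prems"(1) by blast
    ultimately obtain w d where pw: "path_of (snd q) w d" and c: "card ?I \<le> Suc (length w)"
      using "2.IH" q False by blast
    have "finite I"
      using "2.prems"(1) finite_subset by blast
    then have "card I \<le> Suc (card ?I)"
      by (cases "j \<in> I") (simp_all add: card_Suc_Diff1)
    then show ?thesis
      using c path_of.intros(2)[OF q pw] by fastforce
  qed
qed

lemma det_tree_for_unit_table_long_path:
  assumes "det_tree_for k (unit_table \<phi> n) \<Gamma>"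
  shows "\<exists>w d. complete_path \<Gamma> w d \<and> \<phi> n \<le> length w"
proof -
  let ?E = "unit_table \<phi> n" and ?r = "Suc (\<phi> n)"
  from assms obtain t where \<Gamma>: "\<Gamma> = [t]" and dt: "det_node t"
    by (auto simp: det_tree_for_def length_Suc_conv)
  have nd: "ndet_tree_for k ?E \<Gamma>"
    using assms by (simp add: det_tree_for_def)
  have cp: "complete_path \<Gamma> w d \<longleftrightarrow> path_of t w d" for w d
    by (simp add: complete_path_def \<Gamma>)
  have "\<forall>i\<in>{..<?r}. \<exists>w d. path_of t w d \<and> row_matches ?E w (unit_vec ?r i)"
  proof
    fix i
    assume "i \<in> {..<?r}"
    then have "(unit_vec ?r i, {i}) \<in> set (rows ?E)"
      by (simp add: rows_unit_table del: upt_Suc)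
    then obtain w d where "complete_path \<Gamma> w d" "(unit_vec ?r i, {i}) \<in> set (rows (subtab ?E w))"
      using nd by (auto simp: ndet_tree_for_def)
    then show "\<exists>w d. path_of t w d \<and> row_matches ?E w (unit_vec ?r i)"
      by (auto simp: cp rows_subtab)
  qed
  moreover have "d = i"
    if "path_of t w d" "i \<in> {..<?r}" "row_matches ?E w (unit_vec ?r i)" for w d i
  proof -
    have row: "(unit_vec ?r i, {i}) \<in> set (rows (subtab ?E w))"
      using that unit_row_in_subtab by simp
    then have "subtab ?E w \<noteq> Lam"
      by (rule subtab_not_Lam)
    then have "d \<in> Pi_tab (subtab ?E w)"
      using nd that(1) by (auto simp: ndet_tree_for_def cp)
    then show "d = i"
      using row by (auto simp: Pi_tab_def)
  qed
  ultimately obtain w d where "path_of t w d" "card {..<?r} \<le> Suc (length w)"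
    using det_node_unit_vec_path[OF dt, of ?E ?r "{..<?r}"]
    by (auto simp: cols_unit_table distinct_group_attrs length_group_attrs)
  then show ?thesis
    by (auto simp: cp)
qed

lemma psi_d_unit_table_ge:
  assumes \<psi>: "bounded_cm \<psi>" and k: "2 \<le> k"
  shows "\<phi> n \<le> psi_d k \<psi> (unit_table \<phi> n)"
proof -
  obtain \<Gamma> where dt: "det_tree_for k (unit_table \<phi> n) \<Gamma>"
    and opt: "psi_tree \<psi> \<Gamma> = psi_d k \<psi> (unit_table \<phi> n)"
    using psi_d_attained_M_k[OF unit_table_in_M_k[OF k] unit_table_not_Lam] k by fastforce
  obtain w d where cp: "complete_path \<Gamma> w d" and len: "\<phi> n \<le> length w"
    using det_tree_for_unit_table_long_path[OF dt] by blast
  have "length w \<le> \<psi> (map fst w)"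
    using \<psi> by (metis bounded_cm_def length_map)
  then show ?thesis
    using len psi_tree_ge[OF cp, of \<psi>] opt by simp
qed

definition unit_guess_tree :: "(nat \<Rightarrow> nat) \<Rightarrow> nat \<Rightarrow> dtree" where
  "unit_guess_tree \<phi> n = map (\<lambda>i. Node (group_attrs \<phi> n ! i) [(1, Leaf i)]) [0..<Suc (\<phi> n)]"

lemma path_of_single_test: "path_of (Node a [(v, Leaf i)]) w d \<longleftrightarrow> w = [(a, v)] \<and> d = i"
proof
  assume "path_of (Node a [(v, Leaf i)]) w d"
  then show "w = [(a, v)] \<and> d = i"
    by (cases rule: path_of.cases) (auto elim: path_of.cases)
next
  assume "w = [(a, v)] \<and> d = i"
  then show "path_of (Node a [(v, Leaf i)]) w d"
    using path_of.intros(2)[of "(v, Leaf i)" "[(v, Leaf i)]" "[]" i a] path_of.intros(1)[of i] by simp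
qed

lemma complete_path_unit_guess_tree:
  "complete_path (unit_guess_tree \<phi> n) w d \<longleftrightarrow> (\<exists>i<Suc (\<phi> n). w = [(group_attrs \<phi> n ! i, 1)] \<and> d = i)"
  by (auto simp: complete_path_def unit_guess_tree_def path_of_single_test simp del: upt_Suc)

lemma ndet_tree_for_unit_guess_tree:
  assumes k: "2 \<le> k"
  shows "ndet_tree_for k (unit_table \<phi> n) (unit_guess_tree \<phi> n)"
  unfolding ndet_tree_for_def
proof (intro conjI)
  let ?E = "unit_table \<phi> n" and ?r = "Suc (\<phi> n)" and ?cs = "group_attrs \<phi> n"
  have matches: "row_matches ?E [(?cs ! i, 1)] (unit_vec ?r j) \<longleftrightarrow> i = j" if "i < ?r" "j < ?r" for i j
    using map_of_zip_unit_vec[of ?cs ?r i j] that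
    by (simp add: row_matches_def cols_unit_table distinct_group_attrs length_group_attrs)
  show "k_tree k (unit_guess_tree \<phi> n)"
    using k by (auto simp: k_tree_def unit_guess_tree_def intro!: wf_node.intros)
  have "b = a" if "has_attr (Node a [(v, Leaf i)]) b" for a v i b
    using that by (cases rule: has_attr.cases) (auto elim: has_attr.cases)
  then show "At_tree (unit_guess_tree \<phi> n) \<subseteq> At ?E"
    by (fastforce simp: At_tree_def unit_guess_tree_def At_def cols_unit_table length_group_attrs)
  show "\<forall>r\<in>set (rows ?E). \<exists>w d. complete_path (unit_guess_tree \<phi> n) w d \<and> r \<in> set (rows (subtab ?E w))"
  proof
    fix r
    assume "r \<in> set (rows ?E)"
    then obtain i where i: "i < ?r" and r: "r = (unit_vec ?r i, {i})"
      by (auto simp: rows_unit_table simp del: upt_Suc)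
    then have "r \<in> set (rows (subtab ?E [(?cs ! i, 1)]))"
      using unit_row_in_subtab matches by simp
    moreover have "complete_path (unit_guess_tree \<phi> n) [(?cs ! i, 1)] i"
      using i by (auto simp: complete_path_unit_guess_tree)
    ultimately show "\<exists>w d. complete_path (unit_guess_tree \<phi> n) w d \<and> r \<in> set (rows (subtab ?E w))"
      by blast
  qed
  show "\<forall>w d. complete_path (unit_guess_tree \<phi> n) w d \<longrightarrow> subtab ?E w = Lam \<or> d \<in> Pi_tab (subtab ?E w)"
  proof (intro allI impI disjI2)
    fix w d
    assume "complete_path (unit_guess_tree \<phi> n) w d"
    then obtain i where i: "i < ?r" and w: "w = [(?cs ! i, 1)]" and d: "d = i"
      by (auto simp: complete_path_unit_guess_tree)
    show "d \<in> Pi_tab (subtab ?E w)"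
      using matches[OF i] by (auto simp: Pi_tab_def rows_subtab rows_unit_table w d simp del: upt_Suc)
  qed
qed

lemma psi_a_unit_table_le:
  assumes "2 \<le> k" and "1 \<le> n"
  shows "psi_a k group_cm (unit_table \<phi> n) \<le> n"
proof -
  have "psi_tree group_cm (unit_guess_tree \<phi> n) = n"
  proof (rule psi_tree_eqI)
    show "complete_path (unit_guess_tree \<phi> n) [(group_attrs \<phi> n ! 0, 1)] 0"
      by (auto simp: complete_path_unit_guess_tree)
  next
    fix w d
    assume "complete_path (unit_guess_tree \<phi> n) w d"
    then obtain i where i: "i < Suc (\<phi> n)" and w: "w = [(group_attrs \<phi> n ! i, 1)]"
      by (auto simp: complete_path_unit_guess_tree)
    have "group_attrs \<phi> n ! i \<in> set (group_attrs \<phi> n)"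
      using i by (metis length_group_attrs nth_mem)
    then have "attr_group (group_attrs \<phi> n ! i) = n"
      by (rule attr_group_group_attrs)
    then show "group_cm (map fst w) = n"
      using assms(2) by (simp add: w group_cm_def)
  qed
  then show ?thesis
    using psi_a_le[OF ndet_tree_for_unit_guess_tree[OF assms(1), of \<phi> n], where \<psi> = group_cm] by simp
qed

section \<open>The hierarchy function\<close>

lemma H_fun_le:
  assumes "Lam \<in> A" and "\<And>T. T \<in> A \<Longrightarrow> psi_a k \<psi> T \<le> n \<Longrightarrow> psi_d k \<psi> T \<le> b"
  shows "\<exists>h. H_fun k \<psi> A n = Some h \<and> h \<le> b"
proof -
  let ?S = "{psi_d k \<psi> T |T. T \<in> A \<and> psi_a k \<psi> T \<le> n}"
  have bounded: "?S \<subseteq> {..b}"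
    using assms(2) by auto
  then have fin: "finite ?S"
    by (rule finite_subset) simp
  have "psi_d k \<psi> Lam \<in> ?S"
    by (intro CollectI exI[of _ Lam]) (simp add: assms(1) psi_a_def)
  then have "Max ?S \<in> ?S"
    using fin Max_in by blast
  then have "Max ?S \<le> b"
    using bounded by auto
  moreover have "H_fun k \<psi> A n = Some (Max ?S)"
    by (simp only: H_fun_def Let_def if_P[OF fin])
  ultimately show ?thesis
    by blast
qed

lemma H_fun_ge:
  assumes "H_fun k \<psi> A n = Some h" and "T \<in> A" and "psi_a k \<psi> T \<le> n"
  shows "psi_d k \<psi> T \<le> h"
proof -
  let ?S = "{psi_d k \<psi> T |T. T \<in> A \<and> psi_a k \<psi> T \<le> n}"
  have "finite ?S" and "h = Max ?S"
    using assms(1) by (auto simp: H_fun_def Let_def split: if_splits)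
  moreover have "psi_d k \<psi> T \<in> ?S"
    using assms(2,3) by blast
  ultimately show ?thesis
    by simp
qed

theorem theorem3:
  fixes k :: nat and \<phi> :: "nat \<Rightarrow> nat"
  assumes "k \<ge> 2" and "mono \<phi>" and "\<forall>n. n \<le> \<phi> n" and "\<phi> 0 = 0"
  shows "\<exists>A \<psi>. closed_class k A \<and> bounded_cm \<psi> \<and> everywhere_defined k \<psi> A
           \<and> (\<forall>n. \<phi> n \<le> the (H_fun k \<psi> A n) \<and> the (H_fun k \<psi> A n) \<le> \<phi> n + n)"
proof -
  let ?A = "group_tables k \<phi>"
  have k: "0 < k"
    using assms(1) by simp
  have upper: "\<exists>h. H_fun k group_cm ?A n = Some h \<and> h \<le> \<phi> n + n" for n
    by (rule H_fun_le[OF Lam_in_group_tables psi_d_group_tables_le[OF assms(2,3) k]])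
  have lower: "\<phi> n \<le> h" if H: "H_fun k group_cm ?A n = Some h" for n h
  proof (cases "n = 0")
    case False
    then have n: "1 \<le> n"
      by simp
    have "psi_d k group_cm (unit_table \<phi> n) \<le> h"
      using H_fun_ge[OF H unit_table_in_group_tables[OF n assms(1)] psi_a_unit_table_le[OF assms(1) n]] .
    with psi_d_unit_table_ge[OF bounded_cm_group_cm assms(1)] show ?thesis
      by (rule le_trans)
  qed (simp add: assms(4))
  show ?thesis
  proof (intro exI[of _ ?A] exI[of _ group_cm] conjI allI)
    show "closed_class k ?A" by (rule closed_class_group_tables)
    show "bounded_cm group_cm" by (rule bounded_cm_group_cm)
    show "everywhere_defined k group_cm ?A"
      using upper by (auto simp: everywhere_defined_def)
  next
    fix n
    obtain h where "H_fun k group_cm ?A n = Some h" and "h \<le> \<phi> n + n"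
      using upper by blast
    with lower show "\<phi> n \<le> the (H_fun k group_cm ?A n)" and "the (H_fun k group_cm ?A n) \<le> \<phi> n + n"
      by simp_all
  qed
qed

end
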